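(* Let $z$ be a real function of one real variable, twice continuously differentiable near $t=0$ with $\dot z(0)\neq0$, and let $f(u_+,u_-)$ be defined near $(0,0)$ implicitly by $$f=\frac{2u_+}{\dot z(t)}+z(t),\qquad u_-=\frac{u_+}{\dot z(t)^2}+t,$$ with $t=t(u_+,u_-)$ the solution of the second equation near $t=0$. Then $f$ satisfies (i) $f$ is analytic near $(u_+,u_-)=(0,0)$ and (ii) $f(u_+,u_-)=u_++u_-+O(|u_\pm|^2)$, if and only if $z$ is analytic near $t=0$ and $z(t)=t+O(t^2)$.
   Context: $\dot z$ denotes the derivative of $z$; analytic near a point means given by a convergent power series on a neighborhood of that point; $O(|u_\pm|^2)$ denotes terms of total order at least two in $(u_+,u_-)$. *)

theory Defs
  imports "HOL-Analysis.Analysis" "HOL-Library.Landau_Symbols"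
begin

definition real_analytic_at :: "(real \<Rightarrow> real) \<Rightarrow> real \<Rightarrow> bool" where
  "real_analytic_at g x \<longleftrightarrow>
     (\<exists>a::nat \<Rightarrow> real. \<exists>r>0. \<forall>t\<in>ball x r. ((\<lambda>n. a n * (t - x) ^ n) has_sum g t) UNIV)"

definition real_analytic2_at :: "(real \<times> real \<Rightarrow> real) \<Rightarrow> real \<times> real \<Rightarrow> bool" where
  "real_analytic2_at g p \<longleftrightarrow>
     (\<exists>a::nat \<Rightarrow> nat \<Rightarrow> real. \<exists>r>0. \<forall>u\<in>ball p r.
        ((\<lambda>(i,j). a i j * (fst u - fst p) ^ i * (snd u - snd p) ^ j) has_sum g u) UNIV)"

end

theory Submission
  imports Defs "HOL-Complex_Analysis.Complex_Analysis"
begin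

(* Restricting to u_+ = 0 gives T(0, t) = t and f(0, t) = z(t), so (i) and (ii) for f say
   that z is analytic with z(t) = t + O(t^2).

   Conversely, put h = 1/z' and t = T(u). Since u_- = u_+ h(t)^2 + t, the error is
     f(u) - u_+ - u_- = (z(t) - t) - u_+ (h(t) - 1)^2,
   and t = O(|u|), h(t) - 1 = O(t) because z' is differentiable and z'(0) = 1 by
   z(t) = t + O(t^2); this gives (ii).
   For (i), z extends to a holomorphic Z near 0, and for small complex (x, y) the equation
   s = y - x / Z'(s)^2 has a unique small solution tau(x, y): the fixed point of a contraction
   whose iterates converge uniformly in (x, y). Hence tau, and with it 2 x / Z'(tau) + Z(tau),
   is jointly continuous and holomorphic in each variable, and Osgood's lemma (a Cauchy integral
   in one variable, Morera's theorem in the other) expands it into a double power series.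
   On real arguments tau agrees with T by uniqueness, so the real parts of the coefficients
   give a power series of f. *)

section \<open>The second-order expansion\<close>

lemma has_real_derivative_imp_bigo_nhds:
  fixes g :: "real \<Rightarrow> real"
  assumes "(g has_real_derivative D) (at x)"
  shows "(\<lambda>s. g s - g x) \<in> O[nhds x](\<lambda>s. s - x)"
proof (rule bigoI)
  have "((\<lambda>s. (g s - g x) / (s - x)) \<longlongrightarrow> D) (at x)"
    using assms by (simp add: has_field_derivative_iff)
  then have "eventually (\<lambda>s. dist ((g s - g x) / (s - x)) D < 1) (at x)"
    by (rule tendstoD) simp
  then have "eventually (\<lambda>s. s \<noteq> x \<longrightarrow> \<bar>(g s - g x) / (s - x)\<bar> \<le> \<bar>D\<bar> + 1) (nhds x)"
    unfolding eventually_at_filter dist_real_def by eventually_elim (auto simp del: abs_divide)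
  then show "eventually (\<lambda>s. norm (g s - g x) \<le> (\<bar>D\<bar> + 1) * norm (s - x)) (nhds x)"
    by eventually_elim (auto simp: abs_divide divide_le_eq)
qed

lemma bigo_power2_imp_has_real_derivative_0:
  fixes f :: "real \<Rightarrow> real"
  assumes "f \<in> O[nhds 0](\<lambda>t. t\<^sup>2)"
  shows "(f has_real_derivative 0) (at 0)"
proof -
  obtain c where bound: "eventually (\<lambda>t. \<bar>f t\<bar> \<le> c * t\<^sup>2) (nhds 0)"
    using assms by (elim landau_o.bigE) auto
  then have f0: "f 0 = 0"
    using eventually_nhds_x_imp_x by fastforce
  have "eventually (\<lambda>t. norm (f t / t) \<le> norm t * c) (at 0)"
    using bound unfolding eventually_at_filter
    by eventually_elim (auto simp: divide_le_eq abs_mult_self_eq abs_mult power2_eq_square mult_ac)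
  then have "((\<lambda>t. f t / t) \<longlongrightarrow> 0) (at 0)"
    by (rule tendsto_0_le[OF tendsto_ident_at])
  then show "(f has_real_derivative 0) (at 0)"
    by (simp add: has_field_derivative_iff f0)
qed

lemma fst_snd_bigo_norm:
  "fst \<in> O[F](norm :: real \<times> real \<Rightarrow> real)" "snd \<in> O[F](norm :: real \<times> real \<Rightarrow> real)"
proof -
  have "norm (fst u) \<le> norm u" "norm (snd u) \<le> norm u" for u :: "real \<times> real"
    by (metis norm_fst_le norm_snd_le prod.collapse)+
  then show "fst \<in> O[F](norm :: real \<times> real \<Rightarrow> real)" "snd \<in> O[F](norm :: real \<times> real \<Rightarrow> real)"
    by (auto intro!: bigoI[where c = 1] always_eventually)
qed

lemma isCont_compose_bigo_1:
  fixes h :: "'a::real_normed_field \<Rightarrow> 'b::real_normed_field"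
  assumes "isCont h x" "(T \<longlongrightarrow> x) F"
  shows "(\<lambda>u. h (T u)) \<in> O[F](\<lambda>_. 1)"
proof (rule bigoI_tendsto[where c = "h x"])
  show "((\<lambda>u. h (T u) / 1) \<longlongrightarrow> h x) F"
    using isCont_tendsto_compose[OF assms] by simp
qed simp

lemma implicit_solution_bigo_norm:
  fixes h :: "real \<Rightarrow> real" and T :: "real \<times> real \<Rightarrow> real"
  assumes h: "isCont h 0" and T: "(T \<longlongrightarrow> 0) (nhds (0, 0))"
    and eq: "eventually (\<lambda>u. snd u = fst u * (h (T u))\<^sup>2 + T u) (nhds (0, 0))"
  shows "T \<in> O[nhds (0, 0)](norm)"
proof -
  have "(\<lambda>u. (h (T u))\<^sup>2) \<in> O[nhds (0, 0)](\<lambda>_. 1)"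
    using landau_o.big_power[OF isCont_compose_bigo_1[OF h T], of 2] by simp
  then have "(\<lambda>u. snd u - fst u * (h (T u))\<^sup>2) \<in> O[nhds (0, 0)](norm)"
    using fst_snd_bigo_norm(2) by (intro sum_in_bigo landau_o.big_1_mult[OF fst_snd_bigo_norm(1)])
  moreover have "eventually (\<lambda>u. snd u - fst u * (h (T u))\<^sup>2 = T u) (nhds (0, 0))"
    using eq by eventually_elim simp
  ultimately show ?thesis
    by (rule landau_o.big.in_cong[THEN iffD1, rotated])
qed

lemma implicit_expansion_bigo:
  fixes g z :: "real \<Rightarrow> real" and T :: "real \<times> real \<Rightarrow> real"
  assumes g: "(g has_real_derivative g') (at 0)" "g 0 = 1"
    and z: "(\<lambda>t. z t - t) \<in> O[nhds 0](\<lambda>t. t\<^sup>2)"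
    and T: "(T \<longlongrightarrow> 0) (nhds (0, 0))"
    and eq: "eventually (\<lambda>u. snd u = fst u / (g (T u))\<^sup>2 + T u) (nhds (0, 0))"
  shows "(\<lambda>u. (2 * fst u / g (T u) + z (T u)) - (fst u + snd u)) \<in> O[nhds (0, 0)](\<lambda>u. (norm u)\<^sup>2)"
proof -
  let ?F = "nhds (0::real, 0::real)"
  define h where "h t = 1 / g t" for t
  have h: "(h has_real_derivative - g') (at 0)" "h 0 = 1"
    using DERIV_inverse_fun[OF g(1)] g(2) by (simp_all add: h_def [abs_def] divide_inverse)
  have "eventually (\<lambda>u. snd u = fst u * (h (T u))\<^sup>2 + T u) ?F"
    using eq by eventually_elim (simp add: h_def power_divide)
  then have T_norm: "T \<in> O[?F](norm)"
    by (rule implicit_solution_bigo_norm[OF DERIV_isCont[OF h(1)] T])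
  have "(\<lambda>u. z (T u) - T u) \<in> O[?F](\<lambda>u. (T u)\<^sup>2)"
    by (rule landau_o.big.compose[OF z T])
  also have "(\<lambda>u. (T u)\<^sup>2) \<in> O[?F](\<lambda>u. (norm u)\<^sup>2)"
    by (rule landau_o.big_power[OF T_norm])
  finally have z_part: "(\<lambda>u. z (T u) - T u) \<in> O[?F](\<lambda>u. (norm u)\<^sup>2)" .
  have "(\<lambda>u. h (T u) - 1) \<in> O[?F](T)"
    using landau_o.big.compose[OF has_real_derivative_imp_bigo_nhds[OF h(1)] T] h(2) by simp
  also note T_norm
  finally have "(\<lambda>u. fst u * (h (T u) - 1)) \<in> O[?F](\<lambda>u. norm u * norm u)"
    by (rule landau_o.big.mult[OF fst_snd_bigo_norm(1)])
  moreover have "(\<lambda>u. h (T u) - 1) \<in> O[?F](\<lambda>_. 1)"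
    using isCont_compose_bigo_1[OF DERIV_isCont[OF h(1)] T] by (intro sum_in_bigo) auto
  ultimately have "(\<lambda>u. fst u * (h (T u) - 1) * (h (T u) - 1)) \<in> O[?F](\<lambda>u. norm u * norm u)"
    by (rule landau_o.big_1_mult)
  then have h_part: "(\<lambda>u. fst u * (h (T u) - 1)\<^sup>2) \<in> O[?F](\<lambda>u. (norm u)\<^sup>2)"
    by (simp add: power2_eq_square mult.assoc)
  have "eventually (\<lambda>u. (2 * fst u / g (T u) + z (T u)) - (fst u + snd u)
      = (z (T u) - T u) - fst u * (h (T u) - 1)\<^sup>2) ?F"
    using eq
  proof eventually_elim
    case (elim u)
    then show ?case by (cases "g (T u) = 0") (simp_all add: h_def power2_eq_square field_simps)
  qed
  moreover have "(\<lambda>u. (z (T u) - T u) - fst u * (h (T u) - 1)\<^sup>2) \<in> O[?F](\<lambda>u. (norm u)\<^sup>2)"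
    using z_part h_part by (rule sum_in_bigo)
  ultimately show ?thesis by (rule landau_o.big.in_cong[THEN iffD2])
qed

section \<open>Restriction to the axis u_+ = 0\<close>

lemma bigo_norm_power2_slice:
  fixes g :: "real \<times> real \<Rightarrow> real"
  assumes "g \<in> O[nhds (0, 0)](\<lambda>u. (norm u)\<^sup>2)"
  shows "(\<lambda>t. g (0, t)) \<in> O[nhds 0](\<lambda>t. t\<^sup>2)"
proof -
  have "filterlim (\<lambda>t::real. (0::real, t)) (nhds (0, 0)) (nhds 0)"
    by (intro tendsto_Pair tendsto_const filterlim_ident)
  from landau_o.big.compose[OF assms this] show ?thesis
    by (simp add: norm_Pair)
qed

lemma real_analytic_at_cong:
  assumes "real_analytic_at g x" and "eventually (\<lambda>t. g t = h t) (nhds x)"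
  shows "real_analytic_at h x"
proof -
  obtain a r where "r > 0" and a: "\<And>t. t \<in> ball x r \<Longrightarrow> ((\<lambda>n. a n * (t - x) ^ n) has_sum g t) UNIV"
    using assms(1) unfolding real_analytic_at_def by blast
  moreover obtain e where "e > 0" and gh: "\<And>t. t \<in> ball x e \<Longrightarrow> g t = h t"
    using assms(2) unfolding eventually_nhds_metric by (auto simp: dist_commute)
  ultimately show ?thesis
    unfolding real_analytic_at_def
  proof (intro exI[of _ a] exI[of _ "min r e"] conjI ballI)
    fix t assume "t \<in> ball x (min r e)"
    then show "((\<lambda>n. a n * (t - x) ^ n) has_sum h t) UNIV"
      using a[of t] gh[of t] by simp
  qed simp
qed

lemma real_analytic2_at_slice:
  assumes "real_analytic2_at g (x, y)"
  shows "real_analytic_at (\<lambda>t. g (x, t)) y"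
proof -
  obtain a r where "r > 0" and a: "\<And>u. u \<in> ball (x, y) r \<Longrightarrow>
      ((\<lambda>(i, j). a i j * (fst u - x) ^ i * (snd u - y) ^ j) has_sum g u) UNIV"
    using assms unfolding real_analytic2_at_def fst_conv snd_conv by blast
  have "((\<lambda>j. a 0 j * (t - y) ^ j) has_sum g (x, t)) UNIV" if "t \<in> ball y r" for t
  proof -
    have "((\<lambda>(i, j). a i j * 0 ^ i * (t - y) ^ j) has_sum g (x, t)) UNIV"
      using a[of "(x, t)"] that by (simp add: dist_Pair_Pair)
    then have "((\<lambda>(i, j). a i j * 0 ^ i * (t - y) ^ j) has_sum g (x, t)) (range (Pair 0))"
      by (rule has_sum_cong_neutral[THEN iffD1, rotated -1]) (auto simp: image_iff)
    then show ?thesis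
      by (subst (asm) has_sum_reindex) (auto simp: o_def intro: inj_onI)
  qed
  with \<open>r > 0\<close> show ?thesis
    unfolding real_analytic_at_def by blast
qed

lemma implicit_function_axis_restriction:
  fixes g z :: "real \<Rightarrow> real" and T :: "real \<times> real \<Rightarrow> real"
  assumes U: "open U" "(0, 0) \<in> U" and Teq: "\<forall>u\<in>U. snd u = fst u / (g (T u))\<^sup>2 + T u"
    and analytic: "real_analytic2_at (\<lambda>u. 2 * fst u / g (T u) + z (T u)) (0, 0)"
    and error: "(\<lambda>u. (2 * fst u / g (T u) + z (T u)) - (fst u + snd u)) \<in> O[nhds (0, 0)](\<lambda>u. (norm u)\<^sup>2)"
  shows "real_analytic_at z 0 \<and> (\<lambda>t. z t - t) \<in> O[nhds 0](\<lambda>t. t\<^sup>2)"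
proof
  have "filterlim (\<lambda>t::real. (0::real, t)) (nhds (0, 0)) (nhds 0)"
    by (intro tendsto_Pair tendsto_const filterlim_ident)
  then have "eventually (\<lambda>t. (0, t) \<in> U) (nhds 0)"
    using eventually_nhds_in_open[OF U] by (rule filterlim_iff[THEN iffD1, rule_format])
  then have "eventually (\<lambda>t. T (0, t) = t) (nhds 0)"
    by eventually_elim (use Teq in force)
  then have slice: "eventually (\<lambda>t. 2 * fst (0::real, t) / g (T (0, t)) + z (T (0, t)) = z t) (nhds 0)"
    by eventually_elim simp
  show "real_analytic_at z 0"
    using real_analytic_at_cong[OF real_analytic2_at_slice[OF analytic] slice] .
  have "eventually (\<lambda>t. 2 * fst (0::real, t) / g (T (0, t)) + z (T (0, t))
      - (fst (0::real, t) + snd (0::real, t)) = z t - t) (nhds 0)"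
    using slice by eventually_elim simp
  then show "(\<lambda>t. z t - t) \<in> O[nhds 0](\<lambda>t. t\<^sup>2)"
    using bigo_norm_power2_slice[OF error] by (rule landau_o.big.in_cong[THEN iffD1])
qed

section \<open>Holomorphic parameter integrals\<close>

lemma continuous_on_contour_integral_param:
  fixes F :: "'a::topological_space \<Rightarrow> complex \<Rightarrow> complex"
  assumes g: "path g" "continuous_on {0..1} (\<lambda>t. vector_derivative g (at t))"
    and F: "continuous_on (S \<times> path_image g) (\<lambda>(x, w). F x w)"
  shows "continuous_on S (\<lambda>x. contour_integral g (F x))"
proof -
  have "continuous_on (S \<times> {0..1}) (\<lambda>p. (\<lambda>(x, w). F x w) (fst p, g (snd p)))"
  proof (rule continuous_on_compose2[OF F])
    have "continuous_on (S \<times> {0..1}) (\<lambda>p. g (snd p))"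
      using g(1) unfolding path_def by (rule continuous_on_compose2) (auto intro: continuous_on_snd continuous_on_id)
    then show "continuous_on (S \<times> {0..1}) (\<lambda>p. (fst p, g (snd p)))"
      by (intro continuous_intros)
  qed (auto simp: path_image_def)
  moreover have "continuous_on (S \<times> {0..1}) (\<lambda>p. vector_derivative g (at (snd p)))"
    by (rule continuous_on_compose2[OF g(2)]) (auto intro: continuous_intros)
  ultimately have "continuous_on (S \<times> cbox 0 1) (\<lambda>(x, t). F x (g t) * vector_derivative g (at t))"
    unfolding case_prod_unfold by (auto intro: continuous_on_mult)
  then have "continuous_on S (\<lambda>x. integral (cbox 0 1) (\<lambda>t. F x (g t) * vector_derivative g (at t)))"
    by (rule integral_continuous_on_param)
  then show ?thesis
    by (simp add: contour_integral_integral)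
qed

lemma contour_integrable_continuous_C1:
  assumes "path g" "continuous_on {0..1} (\<lambda>t. vector_derivative g (at t))"
    and "continuous_on (path_image g) f"
  shows "f contour_integrable_on g"
proof -
  have "continuous_on {0..1} (\<lambda>t. f (g t) * vector_derivative g (at t))"
    using assms(1,2) unfolding path_def
    by (intro continuous_on_mult continuous_on_compose2[OF assms(3)]) (auto simp: path_image_def)
  then show ?thesis
    by (simp add: contour_integrable_on integrable_continuous_real)
qed

lemma contour_integral_linepath_swap:
  assumes g: "valid_path g" "continuous_on {0..1} (\<lambda>t. vector_derivative g (at t))"
    and F: "continuous_on (closed_segment a b \<times> path_image g) (\<lambda>(x, w). F x w)"
  shows "contour_integral (linepath a b) (\<lambda>x. contour_integral g (F x))
      = contour_integral g (\<lambda>w. contour_integral (linepath a b) (\<lambda>x. F x w))"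
    and "(\<lambda>w. contour_integral (linepath a b) (\<lambda>x. F x w)) contour_integrable_on g"
proof -
  show "contour_integral (linepath a b) (\<lambda>x. contour_integral g (F x))
      = contour_integral g (\<lambda>w. contour_integral (linepath a b) (\<lambda>x. F x w))"
    by (rule contour_integral_swap) (use F g in \<open>auto intro: continuous_intros\<close>)
  have "continuous_on (path_image g \<times> closed_segment a b) (\<lambda>(w, x). F x w)"
    using continuous_on_swap_args[OF F] by (simp add: case_prod_unfold)
  then have "continuous_on (path_image g) (\<lambda>w. contour_integral (linepath a b) (\<lambda>x. F x w))"
    by (intro continuous_on_contour_integral_param) (auto intro: continuous_intros)
  then show "(\<lambda>w. contour_integral (linepath a b) (\<lambda>x. F x w)) contour_integrable_on g"
    by (rule contour_integrable_continuous_C1[OF valid_path_imp_path[OF g(1)] g(2)])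
qed

lemma holomorphic_on_contour_integral_param:
  assumes S: "open S"
    and g: "valid_path g" "continuous_on {0..1} (\<lambda>t. vector_derivative g (at t))"
    and F: "continuous_on (S \<times> path_image g) (\<lambda>(x, w). F x w)"
    and hol: "\<And>w. w \<in> path_image g \<Longrightarrow> (\<lambda>x. F x w) holomorphic_on S"
  shows "(\<lambda>x. contour_integral g (F x)) holomorphic_on S"
proof -
  define E where "E a b w = contour_integral (linepath a b) (\<lambda>x. F x w)" for a b w
  have segments: "closed_segment a b \<subseteq> S" "closed_segment b c \<subseteq> S" "closed_segment c a \<subseteq> S"
    if "convex hull {a, b, c} \<subseteq> S" for a b c
    by (rule subset_trans[OF _ that], simp add: segments_subset_convex_hull)+
  have "continuous_on (closed_segment a b \<times> path_image g) (\<lambda>(x, w). F x w)"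
    if "closed_segment a b \<subseteq> S" for a b
    by (rule continuous_on_subset[OF F]) (use that in auto)
  note swap = contour_integral_linepath_swap[OF g this, folded E_def]
  have E_triangle: "E a b w + E b c w + E c a w = 0"
    if abc: "convex hull {a, b, c} \<subseteq> S" and w: "w \<in> path_image g" for a b c w
  proof -
    have "(\<lambda>x. F x w) holomorphic_on convex hull {a, b, c}"
      using hol[OF w] abc by (rule holomorphic_on_subset)
    then have "contour_integral (linepath a b +++ linepath b c +++ linepath c a) (\<lambda>x. F x w) = 0"
      by (intro contour_integral_unique Cauchy_theorem_triangle)
    moreover have "(\<lambda>x. F x w) contour_integrable_on linepath p q" if "closed_segment p q \<subseteq> S" for p q
      using holomorphic_on_imp_continuous_on[OF hol[OF w]] that
      by (intro contour_integrable_continuous_linepath) (rule continuous_on_subset)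
    ultimately show ?thesis
      using segments[OF abc] by (simp add: E_def add.assoc contour_integrable_joinI valid_path_join)
  qed
  have "(\<lambda>x. contour_integral g (F x)) analytic_on S"
  proof (rule Morera_triangle[OF _ S])
    show "continuous_on S (\<lambda>x. contour_integral g (F x))"
      by (rule continuous_on_contour_integral_param[OF valid_path_imp_path[OF g(1)] g(2) F])
    fix a b c
    show "convex hull {a, b, c} \<subseteq> S \<longrightarrow>
      contour_integral (linepath a b) (\<lambda>x. contour_integral g (F x)) +
      contour_integral (linepath b c) (\<lambda>x. contour_integral g (F x)) +
      contour_integral (linepath c a) (\<lambda>x. contour_integral g (F x)) = 0"
    proof
      assume abc: "convex hull {a, b, c} \<subseteq> S"
      note seg = segments[OF abc]
      have "contour_integral g (E a b) + contour_integral g (E b c) + contour_integral g (E c a)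
          = contour_integral g (\<lambda>w. E a b w + E b c w + E c a w)"
        using swap(2)[OF seg(1)] swap(2)[OF seg(2)] swap(2)[OF seg(3)]
        by (simp add: contour_integral_add contour_integrable_add)
      also have "\<dots> = 0"
        using E_triangle[OF abc] by (simp add: contour_integral_eq_0)
      finally show "contour_integral (linepath a b) (\<lambda>x. contour_integral g (F x)) +
        contour_integral (linepath b c) (\<lambda>x. contour_integral g (F x)) +
        contour_integral (linepath c a) (\<lambda>x. contour_integral g (F x)) = 0"
        by (simp add: swap(1) seg)
    qed
  qed
  then show ?thesis by (rule analytic_imp_holomorphic)
qed

section \<open>Functions of two complex variables\<close>

lemma has_sum_double_series_geometric_bound:
  fixes a :: "nat \<Rightarrow> nat \<Rightarrow> complex"
  assumes inner: "\<And>j. (\<lambda>i. a i j) sums b j" and outer: "b sums s"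
    and bound: "\<And>i j. norm (a i j) \<le> M * q ^ i * q ^ j" and q: "0 \<le> q" "q < 1"
  shows "((\<lambda>(i, j). a i j) has_sum s) UNIV"
proof -
  have M: "0 \<le> M" using order_trans[OF norm_ge_zero bound[of 0 0]] by simp
  have "summable (\<lambda>i. norm (q ^ i))" using q by (simp add: summable_geometric)
  then have geom: "((\<lambda>i. q ^ i) has_sum 1 / (1 - q)) UNIV"
    using q by (intro norm_summable_imp_has_sum geometric_sums) auto
  have "(\<lambda>(j, i). M * q ^ i * q ^ j) summable_on UNIV"
    unfolding UNIV_Times_UNIV [symmetric]
  proof (rule summable_on_SigmaI)
    show "((\<lambda>i. (\<lambda>(j, i). M * q ^ i * q ^ j) (j, i)) has_sum M * (1 / (1 - q)) * q ^ j) UNIV" for j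
      unfolding prod.case by (rule has_sum_cmult_left[OF has_sum_cmult_right[OF geom]])
    show "(\<lambda>j. M * (1 / (1 - q)) * q ^ j) summable_on UNIV"
      using geom by (intro summable_on_cmult_right) (auto simp: summable_on_def)
  qed (use M q in auto)
  then have "(\<lambda>p. norm ((\<lambda>(j, i). a i j) p)) summable_on UNIV"
    by (rule Infinite_Sum.abs_summable_on_comparison_test') (auto simp: bound split: prod.split)
  then have "(\<lambda>(j, i). a i j) summable_on UNIV"
    by (rule abs_summable_summable)
  then obtain S where S: "((\<lambda>(j, i). a i j) has_sum S) (Sigma UNIV (\<lambda>_. UNIV))"
    by (auto simp: summable_on_def)
  have "((\<lambda>i. a i j) has_sum b j) UNIV" for j
  proof (rule norm_summable_imp_has_sum[OF _ inner])
    have "summable (\<lambda>i. M * q ^ j * q ^ i)" using q by (intro summable_mult summable_geometric) auto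
    then have "summable (\<lambda>i. M * q ^ i * q ^ j)" by (simp add: mult_ac)
    then show "summable (\<lambda>i. norm (a i j))"
      by (rule summable_comparison_test'[where N = 0]) (simp add: bound)
  qed
  then have "(b has_sum S) UNIV" by (intro has_sum_Sigma'[OF S]) auto
  then have "S = s" using outer by (auto dest: has_sum_imp_sums intro: sums_unique2)
  with S show ?thesis
    using has_sum_swap[where f = "\<lambda>(j, i). a i j" and A = UNIV and B = UNIV] by simp
qed

lemma norm_higher_deriv_div_fact_le:
  fixes f :: "complex \<Rightarrow> complex"
  assumes "f holomorphic_on ball 0 R" "0 < r" "r < R" "\<And>w. norm w = r \<Longrightarrow> norm (f w) \<le> B"
  shows "norm ((deriv ^^ n) f 0 / fact n) \<le> B / r ^ n"
proof -
  have "norm ((deriv ^^ n) f 0) \<le> fact n * B / r ^ n"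
  proof (rule Cauchy_inequality)
    have "f holomorphic_on cball 0 r"
      by (rule holomorphic_on_subset[OF assms(1)]) (use assms(3) in auto)
    then show "f holomorphic_on ball 0 r" "continuous_on (cball 0 r) f"
      by (auto intro: holomorphic_on_imp_continuous_on holomorphic_on_subset[OF _ ball_subset_cball])
  qed (use assms(2,4) in auto)
  then show ?thesis by (simp add: norm_divide field_simps)
qed

(* By Osgood's lemma these are the holomorphic functions of two variables on S x S;
   holomorphic2_on_double_series is its power series form on bidiscs. *)
definition holomorphic2_on :: "(complex \<Rightarrow> complex \<Rightarrow> complex) \<Rightarrow> complex set \<Rightarrow> bool" where
  "holomorphic2_on G S \<longleftrightarrow> continuous_on (S \<times> S) (\<lambda>(x, y). G x y)
     \<and> (\<forall>y\<in>S. (\<lambda>x. G x y) holomorphic_on S) \<and> (\<forall>x\<in>S. G x holomorphic_on S)"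

lemma holomorphic2_on_Taylor_coeff_snd:
  assumes G: "holomorphic2_on G (ball 0 R)"
  shows "(\<lambda>x. (deriv ^^ j) (G x) 0 / fact j) holomorphic_on ball 0 R"
proof (cases "0 < R")
  case True
  define r where "r = R / 2"
  have r: "0 < r" "r < R" using True by (auto simp: r_def)
  have G_cont: "continuous_on (ball 0 R \<times> ball 0 R) (\<lambda>(x, y). G x y)"
    and G_hol1: "\<And>y. y \<in> ball 0 R \<Longrightarrow> (\<lambda>x. G x y) holomorphic_on ball 0 R"
    and G_hol2: "\<And>x. x \<in> ball 0 R \<Longrightarrow> G x holomorphic_on ball 0 R"
    using G by (auto simp: holomorphic2_on_def)
  have Cauchy: "(deriv ^^ j) (G x) 0 / fact j = contour_integral (circlepath 0 r) (\<lambda>y. G x y / y ^ Suc j) / (2 * pi * \<i>)"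
    if x: "x \<in> ball 0 R" for x
  proof -
    have "G x holomorphic_on cball 0 r"
      by (rule holomorphic_on_subset[OF G_hol2[OF x]]) (use r in auto)
    then have "continuous_on (cball 0 r) (G x)" "G x holomorphic_on ball 0 r"
      by (auto intro: holomorphic_on_imp_continuous_on holomorphic_on_subset[OF _ ball_subset_cball])
    from Cauchy_has_contour_integral_higher_derivative_circlepath[OF this, of 0 j] r
    have "((\<lambda>y. G x y / y ^ Suc j) has_contour_integral 2 * pi * \<i> * ((deriv ^^ j) (G x) 0 / fact j))
        (circlepath 0 r)"
      by simp
    then show ?thesis by (simp add: contour_integral_unique)
  qed
  have "(\<lambda>x. contour_integral (circlepath 0 r) (\<lambda>y. G x y / y ^ Suc j)) holomorphic_on ball 0 R"
  proof (rule holomorphic_on_contour_integral_param)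
    have "continuous_on (ball 0 R \<times> sphere 0 r) (\<lambda>p. G (fst p) (snd p) / snd p ^ Suc j)"
      using r by (intro continuous_intros continuous_on_subset[OF G_cont[unfolded case_prod_unfold]]) auto
    then show "continuous_on (ball 0 R \<times> path_image (circlepath 0 r)) (\<lambda>(x, y). G x y / y ^ Suc j)"
      using r by (simp add: case_prod_unfold)
    show "(\<lambda>x. G x y / y ^ Suc j) holomorphic_on ball 0 R" if "y \<in> path_image (circlepath 0 r)" for y
      using that r by (intro holomorphic_intros G_hol1) auto
    show "continuous_on {0..1} (\<lambda>t. vector_derivative (circlepath 0 r) (at t))"
      unfolding vector_derivative_circlepath by (intro continuous_intros)
  qed simp_all
  then have "(\<lambda>x. contour_integral (circlepath 0 r) (\<lambda>y. G x y / y ^ Suc j) / (2 * pi * \<i>))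
      holomorphic_on ball 0 R"
    by (intro holomorphic_intros) auto
  then show ?thesis
    by (rule holomorphic_transform) (simp add: Cauchy)
qed (simp add: ball_empty holomorphic_on_def)

lemma holomorphic2_on_double_series:
  assumes G: "holomorphic2_on G (ball 0 R)" and R: "0 < R"
  obtains c where "\<And>x y. norm x < R / 2 \<Longrightarrow> norm y < R / 2 \<Longrightarrow>
    ((\<lambda>(i, j). c i j * x ^ i * y ^ j) has_sum G x y) UNIV"
proof -
  define r where "r = 3 * R / 4"
  have r: "0 < r" "r < R" using R by (auto simp: r_def)
  have G_hol2: "\<And>x. x \<in> ball 0 R \<Longrightarrow> G x holomorphic_on ball 0 R"
    using G by (auto simp: holomorphic2_on_def)
  obtain M where M: "0 \<le> M" "\<And>x y. x \<in> cball 0 r \<Longrightarrow> y \<in> cball 0 r \<Longrightarrow> norm (G x y) \<le> M"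
  proof -
    have "continuous_on (cball 0 r \<times> cball 0 r) (\<lambda>(x, y). G x y)"
      using G r unfolding holomorphic2_on_def by (auto intro: continuous_on_subset)
    then obtain B where "0 \<le> B" and B: "\<And>p. p \<in> cball 0 r \<times> cball 0 r \<Longrightarrow> norm ((\<lambda>(x, y). G x y) p) \<le> B"
      using continuous_on_compact_bound[OF compact_Times[OF compact_cball compact_cball]] by blast
    show ?thesis
      by (rule that[OF \<open>0 \<le> B\<close>]) (use B in force)
  qed
  define b where "b j x = (deriv ^^ j) (G x) 0 / fact j" for j x
  have b_hol: "b j holomorphic_on ball 0 R" for j
    unfolding b_def [abs_def] by (rule holomorphic2_on_Taylor_coeff_snd[OF G])
  have b_bound: "norm (b j x) \<le> M / r ^ j" if "x \<in> cball 0 r" for j x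
    unfolding b_def using that r M by (intro norm_higher_deriv_div_fact_le[OF G_hol2]) auto
  define c where "c i j = (deriv ^^ i) (b j) 0 / fact i" for i j
  have c_bound: "norm (c i j) \<le> M / r ^ j / r ^ i" for i j
    unfolding c_def using r b_bound by (intro norm_higher_deriv_div_fact_le[OF b_hol]) auto
  show ?thesis
  proof (rule that)
    fix x y :: complex assume x: "norm x < R / 2" and y: "norm y < R / 2"
    have xy: "norm x \<le> 2 / 3 * r" "norm y \<le> 2 / 3 * r" using x y by (simp_all add: r_def)
    show "((\<lambda>(i, j). c i j * x ^ i * y ^ j) has_sum G x y) UNIV"
    proof (rule has_sum_double_series_geometric_bound)
      show "(\<lambda>i. c i j * x ^ i * y ^ j) sums (b j x * y ^ j)" for j
        using sums_mult2[OF holomorphic_power_series[OF b_hol[of j], of x], of "y ^ j"] x r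
        by (simp add: c_def)
      show "(\<lambda>j. b j x * y ^ j) sums G x y"
        using holomorphic_power_series[OF G_hol2, of x y] x y r by (simp add: b_def)
      show "norm (c i j * x ^ i * y ^ j) \<le> M * (2 / 3) ^ i * (2 / 3) ^ j" for i j
      proof -
        have "norm (c i j * x ^ i * y ^ j) = norm (c i j) * norm x ^ i * norm y ^ j"
          by (simp add: norm_mult norm_power)
        also have "\<dots> \<le> M / r ^ j / r ^ i * (2 / 3 * r) ^ i * (2 / 3 * r) ^ j"
          using xy M(1) r by (intro mult_mono power_mono c_bound) auto
        also have "\<dots> = M * (2 / 3) ^ i * (2 / 3) ^ j"
          using r by (simp add: power_mult_distrib field_simps)
        finally show ?thesis .
      qed
    qed auto
  qed
qed

lemma holomorphic2_on_compose:
  assumes \<tau>: "holomorphic2_on \<tau> S" and F: "F holomorphic_on V"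
    and into: "\<And>x y. x \<in> S \<Longrightarrow> y \<in> S \<Longrightarrow> \<tau> x y \<in> V"
  shows "holomorphic2_on (\<lambda>x y. F (\<tau> x y)) S"
  unfolding holomorphic2_on_def
proof (intro conjI ballI)
  have "continuous_on (S \<times> S) (\<lambda>p. F ((\<lambda>(x, y). \<tau> x y) p))"
    using \<tau> into unfolding holomorphic2_on_def
    by (intro continuous_on_compose2[OF holomorphic_on_imp_continuous_on[OF F]]) auto
  then show "continuous_on (S \<times> S) (\<lambda>(x, y). F (\<tau> x y))"
    by (simp add: case_prod_unfold)
  show "(\<lambda>x. F (\<tau> x y)) holomorphic_on S" if "y \<in> S" for y
    using holomorphic_on_compose_gen[OF _ F, of "\<lambda>x. \<tau> x y" S] \<tau> into that
    by (auto simp: holomorphic2_on_def o_def)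
  show "(\<lambda>y. F (\<tau> x y)) holomorphic_on S" if "x \<in> S" for x
    using holomorphic_on_compose_gen[OF _ F, of "\<tau> x" S] \<tau> into that
    by (auto simp: holomorphic2_on_def o_def)
qed

lemma holomorphic2_on_uniform_limit:
  fixes f :: "nat \<Rightarrow> complex \<times> complex \<Rightarrow> complex"
  assumes cont: "\<And>k. continuous_on (cball 0 \<delta> \<times> cball 0 \<delta>) (f k)"
    and hol1: "\<And>k y. y \<in> cball 0 \<delta> \<Longrightarrow> (\<lambda>x. f k (x, y)) holomorphic_on ball 0 \<delta>"
    and hol2: "\<And>k x. x \<in> cball 0 \<delta> \<Longrightarrow> (\<lambda>y. f k (x, y)) holomorphic_on ball 0 \<delta>"
    and lim: "uniform_limit (cball 0 \<delta> \<times> cball 0 \<delta>) f g sequentially"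
  shows "holomorphic2_on (\<lambda>x y. g (x, y)) (ball 0 \<delta>)"
proof -
  have slice: "h holomorphic_on ball 0 \<delta>"
    if "p \<in> cball 0 \<delta> \<rightarrow> cball 0 \<delta> \<times> cball 0 \<delta>" "continuous_on (cball 0 \<delta>) p"
      "\<And>k. (\<lambda>w. f k (p w)) holomorphic_on ball 0 \<delta>" "h = (\<lambda>w. g (p w))" for p h
  proof (rule holomorphic_uniform_limit[where f = "\<lambda>k w. f k (p w)"])
    have "p ` cball 0 \<delta> \<subseteq> cball 0 \<delta> \<times> cball 0 \<delta>" using that(1) by blast
    then show "eventually (\<lambda>k. continuous_on (cball 0 \<delta>) (\<lambda>w. f k (p w))
        \<and> (\<lambda>w. f k (p w)) holomorphic_on ball 0 \<delta>) sequentially"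
      using that(2,3) by (intro always_eventually allI conjI continuous_on_compose2[OF cont]) auto
    show "uniform_limit (cball 0 \<delta>) (\<lambda>k w. f k (p w)) h sequentially"
      unfolding that(4) by (rule uniform_limit_compose'[OF lim that(1)])
  qed auto
  have "continuous_on (cball 0 \<delta> \<times> cball 0 \<delta>) g"
    by (rule uniform_limit_theorem[OF _ lim]) (use cont in auto)
  then have "continuous_on (ball 0 \<delta> \<times> ball 0 \<delta>) g"
    by (rule continuous_on_subset) auto
  moreover have "(\<lambda>x. g (x, y)) holomorphic_on ball 0 \<delta>" if "y \<in> ball 0 \<delta>" for y
  proof (rule slice[where p = "\<lambda>x. (x, y)"])
    show "(\<lambda>x. (x, y)) \<in> cball 0 \<delta> \<rightarrow> cball 0 \<delta> \<times> cball 0 \<delta>" using that by auto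
  qed (use that hol1 in \<open>auto intro: continuous_intros\<close>)
  moreover have "(\<lambda>y. g (x, y)) holomorphic_on ball 0 \<delta>" if "x \<in> ball 0 \<delta>" for x
  proof (rule slice[where p = "\<lambda>y. (x, y)"])
    show "(\<lambda>y. (x, y)) \<in> cball 0 \<delta> \<rightarrow> cball 0 \<delta> \<times> cball 0 \<delta>" using that by auto
  qed (use that hol2 in \<open>auto intro: continuous_intros\<close>)
  ultimately show ?thesis
    by (simp add: holomorphic2_on_def case_prod_unfold)
qed

section \<open>The holomorphic implicit function\<close>

lemma Banach_fix_uniform_limit:
  fixes \<Phi> :: "'p \<Rightarrow> 'a::complete_space \<Rightarrow> 'a"
  assumes S: "closed S" "bounded S" "s0 \<in> S"
    and c: "0 \<le> c" "c < 1"
    and maps: "\<And>p. p \<in> P \<Longrightarrow> \<Phi> p ` S \<subseteq> S"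
    and contr: "\<And>p s s'. p \<in> P \<Longrightarrow> s \<in> S \<Longrightarrow> s' \<in> S \<Longrightarrow> dist (\<Phi> p s) (\<Phi> p s') \<le> c * dist s s'"
  obtains \<tau> where "\<And>p. p \<in> P \<Longrightarrow> \<tau> p \<in> S \<and> \<Phi> p (\<tau> p) = \<tau> p"
    and "\<And>p s. p \<in> P \<Longrightarrow> s \<in> S \<Longrightarrow> \<Phi> p s = s \<Longrightarrow> s = \<tau> p"
    and "uniform_limit P (\<lambda>k p. (\<Phi> p ^^ k) s0) \<tau> sequentially"
proof -
  define \<tau> where "\<tau> p = (THE s. s \<in> S \<and> \<Phi> p s = s)" for p
  have unique: "\<exists>!s. s \<in> S \<and> \<Phi> p s = s" if "p \<in> P" for p
    using Banach_fix[of S c "\<Phi> p"] S c maps[OF that] contr[OF that]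
    by (auto simp: complete_eq_closed)
  have fixed: "\<tau> p \<in> S \<and> \<Phi> p (\<tau> p) = \<tau> p" if "p \<in> P" for p
    unfolding \<tau>_def by (rule theI'[OF unique[OF that]])
  have iter_in: "(\<Phi> p ^^ k) s0 \<in> S" if "p \<in> P" for p k
    by (induction k) (use S(3) maps[OF that] in auto)
  have iter_dist: "dist ((\<Phi> p ^^ k) s0) (\<tau> p) \<le> c ^ k * diameter S" if p: "p \<in> P" for p k
  proof (induction k)
    case 0
    show ?case using diameter_bounded_bound[OF S(2) S(3)] fixed[OF p] by simp
  next
    case (Suc k)
    have "dist ((\<Phi> p ^^ Suc k) s0) (\<tau> p) = dist (\<Phi> p ((\<Phi> p ^^ k) s0)) (\<Phi> p (\<tau> p))"
      using fixed[OF p] by simp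
    also have "\<dots> \<le> c * dist ((\<Phi> p ^^ k) s0) (\<tau> p)"
      using contr[OF p iter_in[OF p] conjunct1[OF fixed[OF p]]] .
    also have "\<dots> \<le> c * (c ^ k * diameter S)"
      using Suc c(1) by (rule mult_left_mono)
    finally show ?case by simp
  qed
  have "uniform_limit P (\<lambda>k p. (\<Phi> p ^^ k) s0) \<tau> sequentially"
  proof (rule uniform_limitI)
    fix e :: real assume "0 < e"
    have "(\<lambda>k. c ^ k * diameter S) \<longlonglongrightarrow> 0 * diameter S"
      using c by (intro tendsto_mult_right LIMSEQ_power_zero) auto
    then have "eventually (\<lambda>k. c ^ k * diameter S < e) sequentially"
      using \<open>0 < e\<close> by (auto dest: order_tendstoD(2))
    then show "eventually (\<lambda>k. \<forall>p\<in>P. dist ((\<Phi> p ^^ k) s0) (\<tau> p) < e) sequentially"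
      by eventually_elim (use iter_dist in \<open>auto intro: le_less_trans\<close>)
  qed
  with fixed unique show ?thesis
    using that by blast
qed

lemma holomorphic_on_lipschitz_cball:
  assumes f: "f holomorphic_on ball z R" and "r < R"
  obtains L where "0 \<le> L"
    and "\<And>s s'. s \<in> cball z r \<Longrightarrow> s' \<in> cball z r \<Longrightarrow> norm (f s - f s') \<le> L * norm (s - s')"
proof -
  have sub: "cball z r \<subseteq> ball z R" using assms(2) by auto
  have "continuous_on (cball z r) (deriv f)"
    by (rule holomorphic_on_imp_continuous_on[OF holomorphic_on_subset[OF holomorphic_deriv[OF f] sub]]) simp
  then obtain L where L: "0 \<le> L" "\<And>s. s \<in> cball z r \<Longrightarrow> norm (deriv f s) \<le> L"
    using continuous_on_compact_bound[OF compact_cball] by blast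
  show ?thesis
  proof (rule that[OF L(1)])
    show "norm (f s - f s') \<le> L * norm (s - s')" if "s \<in> cball z r" "s' \<in> cball z r" for s s'
    proof (rule field_differentiable_bound[OF convex_cball _ L(2) that])
      fix w assume "w \<in> cball z r"
      then have "(f has_field_derivative deriv f w) (at w)"
        using sub by (intro holomorphic_derivI[OF f]) auto
      then show "(f has_field_derivative deriv f w) (at w within cball z r)"
        by (rule has_field_derivative_at_within)
    qed
  qed
qed

lemma implicit_map_contraction:
  fixes H :: "complex \<Rightarrow> complex"
  assumes H: "H holomorphic_on ball 0 \<rho>1" and \<rho>: "0 < \<rho>0" "\<rho>0 < \<rho>1"
  obtains \<delta> where "0 < \<delta>"
    and "\<And>x y s. norm x \<le> \<delta> \<Longrightarrow> norm y \<le> \<delta> \<Longrightarrow> s \<in> cball 0 \<rho>0 \<Longrightarrow> y - x * H s \<in> cball 0 \<rho>0"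
    and "\<And>x y s s'. norm x \<le> \<delta> \<Longrightarrow> s \<in> cball 0 \<rho>0 \<Longrightarrow> s' \<in> cball 0 \<rho>0 \<Longrightarrow>
      dist (y - x * H s) (y - x * H s') \<le> 1 / 2 * dist s s'"
proof -
  let ?S = "cball (0::complex) \<rho>0"
  have S_sub: "?S \<subseteq> ball 0 \<rho>1" using \<rho> by auto
  have "continuous_on ?S H"
    by (rule holomorphic_on_imp_continuous_on[OF holomorphic_on_subset[OF H S_sub]])
  then obtain M where M: "0 \<le> M" "\<And>s. s \<in> ?S \<Longrightarrow> norm (H s) \<le> M"
    using continuous_on_compact_bound[OF compact_cball] by blast
  obtain L where L: "0 \<le> L" and lipschitz: "\<And>s s'. s \<in> ?S \<Longrightarrow> s' \<in> ?S \<Longrightarrow> norm (H s - H s') \<le> L * norm (s - s')"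
    using holomorphic_on_lipschitz_cball[OF H \<rho>(2)] by blast
  define \<delta> where "\<delta> = min (1 / (2 * L + 1)) (\<rho>0 / (M + 1))"
  have \<delta>_pos: "0 < \<delta>" using L(1) M(1) \<rho> by (simp add: \<delta>_def)
  have "\<delta> \<le> 1 / (2 * L + 1)" "\<delta> \<le> \<rho>0 / (M + 1)" by (simp_all add: \<delta>_def)
  then have "\<delta> * (2 * L + 1) \<le> 1" "\<delta> * (M + 1) \<le> \<rho>0"
    using L(1) M(1) by (simp_all add: pos_le_divide_eq)
  then have \<delta>: "\<delta> * L \<le> 1 / 2" "\<delta> + \<delta> * M \<le> \<rho>0"
    using \<delta>_pos by (simp_all add: algebra_simps)
  show ?thesis
  proof (rule that[OF \<delta>_pos])
    fix x y s :: complex assume xy: "norm x \<le> \<delta>" "norm y \<le> \<delta>" and s: "s \<in> ?S"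
    have "norm (y - x * H s) \<le> norm y + norm x * norm (H s)"
      by (metis norm_mult norm_triangle_ineq4)
    also have "\<dots> \<le> \<delta> + \<delta> * M"
      using xy M s \<delta>_pos by (intro add_mono mult_mono) auto
    finally show "y - x * H s \<in> ?S" using \<delta>(2) by simp
  next
    fix x y s s' :: complex assume x: "norm x \<le> \<delta>" and s: "s \<in> ?S" "s' \<in> ?S"
    have "dist (y - x * H s) (y - x * H s') = norm x * norm (H s - H s')"
      by (simp add: dist_norm norm_mult[symmetric] algebra_simps norm_minus_commute)
    also have "\<dots> \<le> \<delta> * (L * norm (s - s'))"
      using x s \<delta>_pos by (intro mult_mono lipschitz) auto
    also have "\<dots> \<le> 1 / 2 * dist s s'"
      using mult_right_mono[OF \<delta>(1) norm_ge_zero[of "s - s'"]] by (simp add: dist_norm mult.assoc)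
    finally show "dist (y - x * H s) (y - x * H s') \<le> 1 / 2 * dist s s'" .
  qed
qed

lemma holomorphic_implicit_iterates:
  fixes H :: "complex \<Rightarrow> complex"
  assumes H: "H holomorphic_on ball 0 \<rho>1" and \<rho>: "0 \<le> \<rho>0" "\<rho>0 < \<rho>1"
    and maps: "\<And>x y s. norm x \<le> \<delta> \<Longrightarrow> norm y \<le> \<delta> \<Longrightarrow> s \<in> cball 0 \<rho>0 \<Longrightarrow> y - x * H s \<in> cball 0 \<rho>0"
  defines "it k p \<equiv> ((\<lambda>s. snd p - fst p * H s) ^^ k) 0"
  shows "continuous_on (cball 0 \<delta> \<times> cball 0 \<delta>) (it k)"
    and "y \<in> cball 0 \<delta> \<Longrightarrow> (\<lambda>x. it k (x, y)) holomorphic_on ball 0 \<delta>"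
    and "x \<in> cball 0 \<delta> \<Longrightarrow> (\<lambda>y. it k (x, y)) holomorphic_on ball 0 \<delta>"
proof -
  let ?P = "cball (0::complex) \<delta> \<times> cball (0::complex) \<delta>"
  have it_Suc: "it (Suc k) p = snd p - fst p * H (it k p)" for k p
    by (simp add: it_def)
  have it_in: "it k p \<in> cball 0 \<rho>0" if "p \<in> ?P" for k p
  proof (induction k)
    case (Suc k)
    then show ?case using maps that by (auto simp: it_Suc mem_Times_iff)
  qed (use \<rho> in \<open>simp add: it_def\<close>)
  show "continuous_on ?P (it k)"
  proof (induction k)
    case (Suc k)
    have "continuous_on (cball 0 \<rho>0) H"
      by (rule holomorphic_on_imp_continuous_on[OF holomorphic_on_subset[OF H]]) (use \<rho> in auto)
    then have "continuous_on ?P (\<lambda>p. snd p - fst p * H (it k p))"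
      by (intro continuous_intros continuous_on_compose2[OF _ Suc]) (auto intro: it_in)
    then show ?case by (simp add: it_Suc [abs_def])
  qed (simp add: it_def)
  have it_hol: "(\<lambda>w. it k (p w)) holomorphic_on ball 0 \<delta>"
    if p: "p ` ball 0 \<delta> \<subseteq> ?P" "(\<lambda>w. fst (p w)) holomorphic_on ball 0 \<delta>" "(\<lambda>w. snd (p w)) holomorphic_on ball 0 \<delta>"
    for k p
  proof (induction k)
    case (Suc k)
    have "it k q \<in> ball 0 \<rho>1" if "q \<in> ?P" for q
      using it_in[OF that, of k] \<rho> by auto
    then have "(\<lambda>w. it k (p w)) ` ball 0 \<delta> \<subseteq> ball 0 \<rho>1"
      using p(1) by blast
    then have "(\<lambda>w. H (it k (p w))) holomorphic_on ball 0 \<delta>"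
      using holomorphic_on_compose_gen[OF Suc H] by (simp add: o_def)
    then show ?case
      unfolding it_Suc by (intro holomorphic_intros p(2,3))
  qed (simp add: it_def)
  show "(\<lambda>x. it k (x, y)) holomorphic_on ball 0 \<delta>" if "y \<in> cball 0 \<delta>"
    using that by (intro it_hol) (auto intro!: holomorphic_intros)
  show "(\<lambda>y. it k (x, y)) holomorphic_on ball 0 \<delta>" if "x \<in> cball 0 \<delta>"
    using that by (intro it_hol) (auto intro!: holomorphic_intros)
qed

lemma holomorphic2_on_implicit:
  fixes H :: "complex \<Rightarrow> complex"
  assumes H: "H holomorphic_on ball 0 \<rho>1" and \<rho>: "0 < \<rho>0" "\<rho>0 < \<rho>1"
  obtains \<delta> \<tau> where "0 < \<delta>" "holomorphic2_on \<tau> (ball 0 \<delta>)"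
    and "\<And>x y. x \<in> ball 0 \<delta> \<Longrightarrow> y \<in> ball 0 \<delta> \<Longrightarrow> \<tau> x y \<in> cball 0 \<rho>0 \<and> \<tau> x y = y - x * H (\<tau> x y)"
    and "\<And>x y s. x \<in> ball 0 \<delta> \<Longrightarrow> y \<in> ball 0 \<delta> \<Longrightarrow> s \<in> cball 0 \<rho>0 \<Longrightarrow> s = y - x * H s \<Longrightarrow> s = \<tau> x y"
proof -
  let ?S = "cball (0::complex) \<rho>0"
  obtain \<delta> where \<delta>: "0 < \<delta>"
    and maps: "\<And>x y s. norm x \<le> \<delta> \<Longrightarrow> norm y \<le> \<delta> \<Longrightarrow> s \<in> ?S \<Longrightarrow> y - x * H s \<in> ?S"
    and contr: "\<And>x y s s'. norm x \<le> \<delta> \<Longrightarrow> s \<in> ?S \<Longrightarrow> s' \<in> ?S \<Longrightarrow>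
      dist (y - x * H s) (y - x * H s') \<le> 1 / 2 * dist s s'"
    by (rule implicit_map_contraction[OF H \<rho>]) (rule that)
  let ?P = "cball (0::complex) \<delta> \<times> cball (0::complex) \<delta>"
  define \<Phi> where "\<Phi> p s = snd p - fst p * H s" for p :: "complex \<times> complex" and s
  obtain \<sigma> where \<sigma>_fixed: "\<And>p. p \<in> ?P \<Longrightarrow> \<sigma> p \<in> ?S \<and> \<Phi> p (\<sigma> p) = \<sigma> p"
    and \<sigma>_unique: "\<And>p s. p \<in> ?P \<Longrightarrow> s \<in> ?S \<Longrightarrow> \<Phi> p s = s \<Longrightarrow> s = \<sigma> p"
    and \<sigma>_lim: "uniform_limit ?P (\<lambda>k p. (\<Phi> p ^^ k) 0) \<sigma> sequentially"
    by (rule Banach_fix_uniform_limit[of ?S 0 "1 / 2" ?P \<Phi>])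
       (use maps contr \<rho> in \<open>auto simp: \<Phi>_def mem_Times_iff\<close>)
  note iterates = holomorphic_implicit_iterates[OF H less_imp_le[OF \<rho>(1)] \<rho>(2) maps]
  have "holomorphic2_on (\<lambda>x y. \<sigma> (x, y)) (ball 0 \<delta>)"
  proof (rule holomorphic2_on_uniform_limit[where f = "\<lambda>k p. ((\<lambda>s. snd p - fst p * H s) ^^ k) 0"])
    show "uniform_limit ?P (\<lambda>k p. ((\<lambda>s. snd p - fst p * H s) ^^ k) 0) \<sigma> sequentially"
      using \<sigma>_lim by (simp add: \<Phi>_def [abs_def])
  qed (use iterates in auto)
  then show ?thesis
    by (rule that[OF \<delta>]) (use \<sigma>_fixed \<sigma>_unique in \<open>auto simp: \<Phi>_def\<close>)
qed

section \<open>Complexification\<close>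

lemma real_analytic_at_holomorphic_extension:
  assumes "real_analytic_at z x"
  obtains Z :: "complex \<Rightarrow> complex" and r where "0 < r" "Z holomorphic_on ball (of_real x) r"
    "\<And>t. t \<in> ball x r \<Longrightarrow> Z (of_real t) = of_real (z t)"
proof -
  obtain a r where r: "0 < r" and a: "\<And>t. t \<in> ball x r \<Longrightarrow> ((\<lambda>n. a n * (t - x) ^ n) has_sum z t) UNIV"
    using assms unfolding real_analytic_at_def by blast
  define Z where "Z w = (\<Sum>n. of_real (a n) * (w - of_real x) ^ n)" for w :: complex
  have Z_sums: "(\<lambda>n. of_real (a n) * (w - of_real x) ^ n) sums Z w" if w: "w \<in> ball (of_real x) r" for w
  proof -
    define t where "t = x + (norm (w - of_real x) + r) / 2"
    have t: "t \<in> ball x r" "norm (w - of_real x) \<le> t - x"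
      using w r by (auto simp: t_def dist_norm norm_minus_commute abs_of_nonneg)
    have "(\<lambda>n. a n * (t - x) ^ n) summable_on UNIV"
      using a[OF t(1)] by (auto simp: summable_on_def)
    then have "(\<lambda>n. norm (a n * (t - x) ^ n)) summable_on UNIV"
      by (rule iffD1[OF summable_on_iff_abs_summable_on_real])
    then have summable_t: "summable (\<lambda>n. norm (a n * (t - x) ^ n))"
      by (rule summable_on_imp_summable)
    have le: "norm (of_real (a n) * (w - of_real x) ^ n) \<le> norm (a n * (t - x) ^ n)" for n
    proof -
      have "norm (w - of_real x) ^ n \<le> \<bar>t - x\<bar> ^ n"
        using t(2) by (intro power_mono) auto
      then show ?thesis
        by (simp add: norm_mult norm_power abs_mult power_abs mult_left_mono)
    qed
    have "summable (\<lambda>n. norm (of_real (a n) * (w - of_real x) ^ n))"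
      using summable_t by (rule summable_comparison_test'[where N = 0]) (use le in simp)
    then show ?thesis
      unfolding Z_def by (rule summable_sums[OF summable_norm_cancel])
  qed
  have "Z (of_real t) = of_real (z t)" if "t \<in> ball x r" for t
  proof -
    have "(\<lambda>n. of_real (a n * (t - x) ^ n)) sums (of_real (z t) :: complex)"
      using sums_of_real[OF has_sum_imp_sums[OF a[OF that]]] .
    moreover have "(\<lambda>n. of_real (a n) * (of_real t - of_real x) ^ n) sums Z (of_real t)"
      using Z_sums[of "of_real t"] that by (simp add: dist_norm flip: of_real_diff)
    ultimately show ?thesis by (simp add: sums_unique2)
  qed
  moreover have "Z holomorphic_on ball (of_real x) r"
    by (rule power_series_holomorphic[OF Z_sums])
  ultimately show ?thesis
    using that r by blast
qed

lemma deriv_holomorphic_extension: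
  fixes z :: "real \<Rightarrow> real" and Z :: "complex \<Rightarrow> complex"
  assumes Z: "Z holomorphic_on ball (of_real x) r"
    and ext: "\<And>t. t \<in> ball x r \<Longrightarrow> Z (of_real t) = of_real (z t)"
    and t: "t \<in> ball x r"
  shows "deriv Z (of_real t) = of_real (deriv z t)"
proof -
  define D where "D = deriv Z (of_real t)"
  have "(Z has_field_derivative D) (at (of_real t))"
    unfolding D_def using t by (intro holomorphic_derivI[OF Z]) (auto simp: dist_norm simp flip: of_real_diff)
  then have "((\<lambda>s. Z (of_real s)) has_vector_derivative D) (at t)"
    by (rule has_vector_derivative_real_field)
  then have "((\<lambda>s. of_real (z s)) has_vector_derivative D) (at t)"
    by (rule has_vector_derivative_transform_within_open[OF _ open_ball t]) (use ext in auto)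
  then have "(z has_real_derivative Re D) (at t)" "((\<lambda>s. 0) has_real_derivative Im D) (at t)"
    by (auto simp: has_vector_derivative_complex_iff)
  moreover from this(2) have "Im D = 0" using DERIV_const DERIV_unique by blast
  ultimately show ?thesis
    by (simp add: D_def DERIV_imp_deriv complex_eq_iff)
qed

lemma real_analytic_at_nonsingular_holomorphic_extension:
  fixes z :: "real \<Rightarrow> real"
  assumes "real_analytic_at z 0" "deriv z 0 \<noteq> 0"
  obtains \<rho> and Z :: "complex \<Rightarrow> complex" where "0 < \<rho>" "Z holomorphic_on ball 0 \<rho>"
    "\<And>w. w \<in> ball 0 \<rho> \<Longrightarrow> deriv Z w \<noteq> 0"
    "\<And>t. t \<in> ball 0 \<rho> \<Longrightarrow> Z (of_real t) = of_real (z t) \<and> deriv Z (of_real t) = of_real (deriv z t)"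
proof -
  obtain Z r where r: "0 < r" and Z: "Z holomorphic_on ball 0 r"
    and Z_ext: "\<And>t. t \<in> ball 0 r \<Longrightarrow> Z (of_real t) = of_real (z t)"
    using real_analytic_at_holomorphic_extension[OF assms(1)] by (metis of_real_0)
  have Z'_ext: "deriv Z (of_real t) = of_real (deriv z t)" if "t \<in> ball 0 r" for t
    using deriv_holomorphic_extension[of Z 0 r z t] Z Z_ext that by simp
  have "isCont (deriv Z) 0"
    using holomorphic_on_imp_continuous_on[OF holomorphic_deriv[OF Z]] r
    by (simp add: continuous_on_eq_continuous_at)
  moreover have "deriv Z 0 \<noteq> 0" using Z'_ext[of 0] r assms(2) by simp
  ultimately obtain e where e: "0 < e" "\<And>w. dist 0 w < e \<Longrightarrow> deriv Z w \<noteq> 0"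
    using continuous_at_avoid by blast
  show ?thesis
  proof (rule that[of "min e r" Z])
    show "Z holomorphic_on ball 0 (min e r)"
      using Z by (rule holomorphic_on_subset) auto
  qed (use r e Z_ext Z'_ext in auto)
qed

lemma real_analytic2_at_of_double_series:
  fixes g :: "real \<times> real \<Rightarrow> real" and c :: "nat \<Rightarrow> nat \<Rightarrow> complex"
  assumes R: "0 < R"
    and series: "\<And>x y. norm x < R \<Longrightarrow> norm y < R \<Longrightarrow> ((\<lambda>(i, j). c i j * x ^ i * y ^ j) has_sum G x y) UNIV"
    and real: "\<And>u. u \<in> ball 0 R \<Longrightarrow> G (of_real (fst u)) (of_real (snd u)) = of_real (g u)"
  shows "real_analytic2_at g (0, 0)"
  unfolding real_analytic2_at_def
proof (intro exI[of _ "\<lambda>i j. Re (c i j)"] exI[of _ R] conjI ballI)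
  fix u :: "real \<times> real" assume u: "u \<in> ball (0, 0) R"
  then have "norm (fst u) < R" "norm (snd u) < R"
    using norm_fst_le[of "fst u" "snd u"] norm_snd_le[of "snd u" "fst u"]
    by (auto simp: dist_norm zero_prod_def [symmetric])
  then have "((\<lambda>(i, j). c i j * of_real (fst u) ^ i * of_real (snd u) ^ j) has_sum of_real (g u)) UNIV"
    using series[of "of_real (fst u)" "of_real (snd u)"] real[of u] u by (simp add: zero_prod_def)
  from has_sum_bounded_linear[OF bounded_linear_Re this]
  show "((\<lambda>(i, j). Re (c i j) * (fst u - fst (0::real, 0::real)) ^ i * (snd u - snd (0::real, 0::real)) ^ j)
      has_sum g u) UNIV"
    by (simp add: case_prod_unfold)
qed (rule R)

lemma implicit_function_holomorphic2_extension:
  fixes z :: "real \<Rightarrow> real"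
  assumes z: "real_analytic_at z 0" "deriv z 0 \<noteq> 0"
  obtains \<rho> \<delta> G where "0 < \<rho>" "0 < \<delta>" "holomorphic2_on G (ball 0 \<delta>)"
    "\<And>p q t. \<bar>p\<bar> < \<delta> \<Longrightarrow> \<bar>q\<bar> < \<delta> \<Longrightarrow> \<bar>t\<bar> < \<rho> \<Longrightarrow> q = p / (deriv z t)\<^sup>2 + t \<Longrightarrow>
      G (of_real p) (of_real q) = of_real (2 * p / deriv z t + z t)"
proof -
  obtain \<rho> Z where \<rho>: "0 < \<rho>" and Z: "Z holomorphic_on ball 0 \<rho>"
    and Z'_nz: "\<And>w. w \<in> ball 0 \<rho> \<Longrightarrow> deriv Z w \<noteq> 0"
    and Z_ext: "\<And>t. t \<in> ball 0 \<rho> \<Longrightarrow> Z (of_real t) = of_real (z t) \<and> deriv Z (of_real t) = of_real (deriv z t)"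
    by (rule real_analytic_at_nonsingular_holomorphic_extension[OF z]) (rule that)
  define H where "H w = 1 / (deriv Z w)\<^sup>2" for w
  define K where "K w = 1 / deriv Z w" for w
  have H: "H holomorphic_on ball 0 \<rho>" and K: "K holomorphic_on ball 0 \<rho>"
    unfolding H_def K_def using Z Z'_nz by (auto intro!: holomorphic_intros)
  obtain \<delta> \<tau> where \<delta>: "0 < \<delta>" and \<tau>: "holomorphic2_on \<tau> (ball 0 \<delta>)"
    and \<tau>_eq: "\<And>x y. x \<in> ball 0 \<delta> \<Longrightarrow> y \<in> ball 0 \<delta> \<Longrightarrow> \<tau> x y \<in> cball 0 (\<rho> / 2) \<and> \<tau> x y = y - x * H (\<tau> x y)"
    and \<tau>_unique: "\<And>x y s. x \<in> ball 0 \<delta> \<Longrightarrow> y \<in> ball 0 \<delta> \<Longrightarrow> s \<in> cball 0 (\<rho> / 2) \<Longrightarrow> s = y - x * H s \<Longrightarrow> s = \<tau> x y"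
    using holomorphic2_on_implicit[OF H, of "\<rho> / 2"] \<rho> by auto
  define G where "G x y = 2 * x * K (\<tau> x y) + Z (\<tau> x y)" for x y
  have "\<tau> x y \<in> ball 0 \<rho>" if "x \<in> ball 0 \<delta>" "y \<in> ball 0 \<delta>" for x y
    using conjunct1[OF \<tau>_eq[OF that]] \<rho> by simp
  then have "holomorphic2_on (\<lambda>x y. K (\<tau> x y)) (ball 0 \<delta>)" "holomorphic2_on (\<lambda>x y. Z (\<tau> x y)) (ball 0 \<delta>)"
    by (auto intro!: holomorphic2_on_compose[OF \<tau>] K Z)
  then have "holomorphic2_on G (ball 0 \<delta>)"
    unfolding G_def holomorphic2_on_def case_prod_unfold by (auto intro!: continuous_intros holomorphic_intros)
  moreover have "G (of_real p) (of_real q) = of_real (2 * p / deriv z t + z t)"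
    if pq: "\<bar>p\<bar> < \<delta>" "\<bar>q\<bar> < \<delta>" and t: "\<bar>t\<bar> < \<rho> / 2" and eq: "q = p / (deriv z t)\<^sup>2 + t" for p q t
  proof -
    have t_ext: "Z (of_real t) = of_real (z t)" "H (of_real t) = of_real (1 / (deriv z t)\<^sup>2)"
        "K (of_real t) = of_real (1 / deriv z t)"
      using Z_ext[of t] t \<rho> by (auto simp: H_def K_def)
    have "of_real t = of_real q - of_real p * H (of_real t)"
      using eq by (simp add: t_ext field_simps)
    then have "\<tau> (of_real p) (of_real q) = of_real t"
      using \<tau>_unique[of "of_real p" "of_real q" "of_real t"] pq t by simp
    then show ?thesis
      by (simp add: G_def t_ext)
  qed
  ultimately show ?thesis
    using that[of "\<rho> / 2" \<delta> G] \<rho> \<delta> by auto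
qed

lemma real_analytic2_at_implicit:
  fixes z :: "real \<Rightarrow> real" and T :: "real \<times> real \<Rightarrow> real" and U :: "(real \<times> real) set"
  assumes z: "real_analytic_at z 0" "deriv z 0 \<noteq> 0"
    and U: "open U" "(0, 0) \<in> U"
    and T: "(T \<longlongrightarrow> 0) (nhds (0, 0))"
    and Teq: "\<forall>u\<in>U. snd u = fst u / (deriv z (T u))\<^sup>2 + T u"
  shows "real_analytic2_at (\<lambda>u. 2 * fst u / deriv z (T u) + z (T u)) (0, 0)"
proof -
  obtain \<rho> \<delta> G where \<rho>: "0 < \<rho>" and \<delta>: "0 < \<delta>" and G: "holomorphic2_on G (ball 0 \<delta>)"
    and G_real: "\<And>p q t. \<bar>p\<bar> < \<delta> \<Longrightarrow> \<bar>q\<bar> < \<delta> \<Longrightarrow> \<bar>t\<bar> < \<rho> \<Longrightarrow> q = p / (deriv z t)\<^sup>2 + t \<Longrightarrow>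
      G (of_real p) (of_real q) = of_real (2 * p / deriv z t + z t)"
    by (rule implicit_function_holomorphic2_extension[OF z]) (rule that)
  obtain c where c: "\<And>x y. norm x < \<delta> / 2 \<Longrightarrow> norm y < \<delta> / 2 \<Longrightarrow>
      ((\<lambda>(i, j). c i j * x ^ i * y ^ j) has_sum G x y) UNIV"
    using holomorphic2_on_double_series[OF G \<delta>] by blast
  have "eventually (\<lambda>u. u \<in> U \<and> norm (T u) < \<rho>) (nhds (0, 0))"
    using \<rho> U by (intro eventually_conj eventually_nhds_in_open order_tendstoD(2)[OF tendsto_norm_zero[OF T]]) auto
  then obtain \<epsilon> where \<epsilon>: "0 < \<epsilon>" and small: "\<And>u. dist u (0, 0) < \<epsilon> \<Longrightarrow> u \<in> U \<and> \<bar>T u\<bar> < \<rho>"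
    unfolding eventually_nhds_metric by auto
  show ?thesis
  proof (rule real_analytic2_at_of_double_series[where R = "min \<epsilon> (\<delta> / 2)"])
    show "((\<lambda>(i, j). c i j * x ^ i * y ^ j) has_sum G x y) UNIV"
      if "norm x < min \<epsilon> (\<delta> / 2)" "norm y < min \<epsilon> (\<delta> / 2)" for x y
      using c that by simp
    fix u :: "real \<times> real" assume u: "u \<in> ball 0 (min \<epsilon> (\<delta> / 2))"
    then have "\<bar>fst u\<bar> < \<delta>" "\<bar>snd u\<bar> < \<delta>"
      using norm_fst_le[of "fst u" "snd u"] norm_snd_le[of "snd u" "fst u"] by auto
    moreover have "u \<in> U" "\<bar>T u\<bar> < \<rho>"
      using small[of u] u by (auto simp: dist_commute zero_prod_def)
    ultimately show "G (of_real (fst u)) (of_real (snd u)) = of_real (2 * fst u / deriv z (T u) + z (T u))"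
      using G_real Teq by auto
  qed (use \<epsilon> \<delta> in auto)
qed

theorem lemma13:
  fixes z :: "real \<Rightarrow> real" and T :: "real \<times> real \<Rightarrow> real" and U :: "(real \<times> real) set"
  assumes C2: "\<exists>e>0. (\<forall>t\<in>ball 0 e. (z has_real_derivative deriv z t) (at t)
                        \<and> (deriv z has_real_derivative deriv (deriv z) t) (at t))
                  \<and> continuous_on (ball 0 e) (deriv (deriv z))"
    and nz: "deriv z 0 \<noteq> 0"
    and U: "open U" "(0, 0) \<in> U"
    and Tcont: "continuous_on U T"
    and T0: "T (0, 0) = 0"
    and Teq: "\<forall>u\<in>U. snd u = fst u / (deriv z (T u))\<^sup>2 + T u"
  shows "(real_analytic2_at (\<lambda>u. 2 * fst u / deriv z (T u) + z (T u)) (0, 0)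
          \<and> (\<lambda>u. (2 * fst u / deriv z (T u) + z (T u)) - (fst u + snd u))
               \<in> O[nhds (0, 0)](\<lambda>u. (norm u)\<^sup>2))
     \<longleftrightarrow> (real_analytic_at z 0 \<and> (\<lambda>t. z t - t) \<in> O[nhds 0](\<lambda>t. t\<^sup>2))"
proof
  assume "real_analytic2_at (\<lambda>u. 2 * fst u / deriv z (T u) + z (T u)) (0, 0)
    \<and> (\<lambda>u. (2 * fst u / deriv z (T u) + z (T u)) - (fst u + snd u)) \<in> O[nhds (0, 0)](\<lambda>u. (norm u)\<^sup>2)"
  then show "real_analytic_at z 0 \<and> (\<lambda>t. z t - t) \<in> O[nhds 0](\<lambda>t. t\<^sup>2)"
    using implicit_function_axis_restriction[OF U Teq] by blast
next
  assume z: "real_analytic_at z 0 \<and> (\<lambda>t. z t - t) \<in> O[nhds 0](\<lambda>t. t\<^sup>2)"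
  have T: "(T \<longlongrightarrow> 0) (nhds (0, 0))"
    using Tcont U T0 by (metis continuous_on_eq_continuous_at isCont_def tendsto_at_iff_tendsto_nhds)
  have "((\<lambda>t. (z t - t) + t) has_real_derivative 0 + 1) (at 0)"
    by (intro DERIV_add bigo_power2_imp_has_real_derivative_0 conjunct2[OF z] DERIV_ident)
  then have z'0: "deriv z 0 = 1"
    by (simp add: DERIV_imp_deriv)
  obtain e where "0 < e" and "\<forall>t\<in>ball 0 e. (deriv z has_real_derivative deriv (deriv z) t) (at t)"
    using C2 by blast
  then have z'': "(deriv z has_real_derivative deriv (deriv z) 0) (at 0)"
    by simp
  have "eventually (\<lambda>u. snd u = fst u / (deriv z (T u))\<^sup>2 + T u) (nhds (0, 0))"
    using eventually_nhds_in_open[OF U] by eventually_elim (use Teq in blast)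
  with z'' z'0 z T show "real_analytic2_at (\<lambda>u. 2 * fst u / deriv z (T u) + z (T u)) (0, 0)
    \<and> (\<lambda>u. (2 * fst u / deriv z (T u) + z (T u)) - (fst u + snd u)) \<in> O[nhds (0, 0)](\<lambda>u. (norm u)\<^sup>2)"
    using real_analytic2_at_implicit[OF _ nz U T Teq] implicit_expansion_bigo by blast
qed

end
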